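(* Let $A$ be a finite-dimensional vector space with multiplications $\succ_A,\prec_A:A\otimes A\to A$, and define $x\circ_A y=x\succ_A y+x\prec_A y$ for all $x,y\in A$. Then the following statements are equivalent: (1) $(A,\succ_A,\prec_A)$ is an anti-pre-Leibniz algebra. (2) The identities (AL2), (AL3), (AL4) hold, together with $$(x\circ_A y)\succ_A z=x\prec_A(y\circ_A z)-y\prec_A(x\circ_A z),\quad\forall x,y,z\in A.$$ (3) $(A,\circ_A)$ is a Leibniz algebra and $(-\mathcal L_{\succ_A},-\mathcal R_{\prec_A},A)$ is a representation of $(A,\circ_A)$. (4) $(A,\circ_A)$ is a Leibniz algebra and $(-\mathcal L^*_{\succ_A},\mathcal L^*_{\succ_A}+\mathcal R^*_{\prec_A},A^* )$ is a representation of $(A,\circ_A)$.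
   Context: All vector spaces are finite-dimensional over a field $\mathbb K$ of characteristic zero. For a multiplication $\ast$ on $A$, $\mathcal L_\ast(x)y=x\ast y$ and $\mathcal R_\ast(x)y=y\ast x$. For a linear map $f:A\to\mathrm{End}(V)$, $f^*:A\to\mathrm{End}(V^* )$ is defined by $\langle f^*(x)u^*,v\rangle=-\langle u^*,f(x)v\rangle$. A Leibniz algebra is a vector space $A$ with a multiplication $\circ_A$ satisfying $x\circ_A(y\circ_A z)=(x\circ_A y)\circ_A z+y\circ_A(x\circ_A z)$ for all $x,y,z$. A representation of a Leibniz algebra $(A,\circ_A)$ is a triple $(l,r,V)$ with $V$ a vector space and linear maps $l,r:A\to\mathrm{End}(V)$ such that for all $x,y\in A,v\in V$: $l(x\circ_A y)v=l(x)l(y)v-l(y)l(x)v$; $r(x\circ_A y)v=l(x)r(y)v-r(y)l(x)v$; $r(y)l(x)v=-r(y)r(x)v$. An anti-pre-Leibniz algebra is a vector space $A$ with multiplications $\succ_A,\prec_A$ such that, with $x\circ_A y=x\succ_A y+x\prec_A y$, for all $x,y,z\in A$: (AL1) $(x\circ_A y)\prec_A z=x\succ_A(y\circ_A z)-y\succ_A(x\circ_A z)$; (AL2) $(x\circ_A y)\succ_A z=y\succ_A(x\succ_A z)-x\succ_A(y\succ_A z)$; (AL3) $x\prec_A(y\circ_A z)=(y\succ_A x)\prec_A z-y\succ_A(x\prec_A z)$; (AL4) $(x\succ_A y)\prec_A z=-(y\prec_A x)\prec_A z$. *)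

theory Defs
  imports Complex_Main "HOL-Library.Function_Algebras"
begin

(* A vector space over 'k is modelled as a type 'a::ab_group_add with a scalar
   multiplication scale satisfying the vector_space locale axioms.
   Multiplications are binary operations 'a => 'a => 'a. *)

definition bilinear_op :: "('k::field \<Rightarrow> 'a::ab_group_add \<Rightarrow> 'a) \<Rightarrow> ('a \<Rightarrow> 'a \<Rightarrow> 'a) \<Rightarrow> bool" where
  "bilinear_op scale m \<longleftrightarrow>
     (\<forall>x. Vector_Spaces.linear scale scale (m x)) \<and> (\<forall>y. Vector_Spaces.linear scale scale (\<lambda>x. m x y))"

definition circ_op :: "('a::plus \<Rightarrow> 'a \<Rightarrow> 'a) \<Rightarrow> ('a \<Rightarrow> 'a \<Rightarrow> 'a) \<Rightarrow> 'a \<Rightarrow> 'a \<Rightarrow> 'a" where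
  "circ_op succ prec x y = succ x y + prec x y"

definition leibniz_algebra :: "('a::ab_group_add \<Rightarrow> 'a \<Rightarrow> 'a) \<Rightarrow> bool" where
  "leibniz_algebra m \<longleftrightarrow>
     (\<forall>x y z. m x (m y z) = m (m x y) z + m y (m x z))"

(* Representation (l, r, V) of a Leibniz algebra (A, m): V is the carrier (a subspace
   of the ambient module type 'w with scalar multiplication sV), l and r are linear
   maps A -> End(V), subject to the three identities. *)
definition leibniz_rep ::
  "('k::field \<Rightarrow> 'a::ab_group_add \<Rightarrow> 'a) \<Rightarrow> ('a \<Rightarrow> 'a \<Rightarrow> 'a) \<Rightarrow>
   ('k \<Rightarrow> 'w::ab_group_add \<Rightarrow> 'w) \<Rightarrow> 'w set \<Rightarrow>
   ('a \<Rightarrow> 'w \<Rightarrow> 'w) \<Rightarrow> ('a \<Rightarrow> 'w \<Rightarrow> 'w) \<Rightarrow> bool" where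
  "leibniz_rep sA m sV V l r \<longleftrightarrow>
     (\<forall>x. \<forall>v\<in>V. l x v \<in> V \<and> r x v \<in> V) \<and>
     (\<forall>x. \<forall>v\<in>V. \<forall>w\<in>V. l x (v + w) = l x v + l x w \<and> r x (v + w) = r x v + r x w) \<and>
     (\<forall>x c. \<forall>v\<in>V. l x (sV c v) = sV c (l x v) \<and> r x (sV c v) = sV c (r x v)) \<and>
     (\<forall>x y. \<forall>v\<in>V. l (x + y) v = l x v + l y v \<and> r (x + y) v = r x v + r y v) \<and>
     (\<forall>x c. \<forall>v\<in>V. l (sA c x) v = sV c (l x v) \<and> r (sA c x) v = sV c (r x v)) \<and>
     (\<forall>x y. \<forall>v\<in>V.
        l (m x y) v = l x (l y v) - l y (l x v) \<and>
        r (m x y) v = l x (r y v) - r y (l x v) \<and>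
        r y (l x v) = - r y (r x v))"

definition dual_space :: "('k::field \<Rightarrow> 'a::ab_group_add \<Rightarrow> 'a) \<Rightarrow> ('a \<Rightarrow> 'k) set" where
  "dual_space scale = {u. Vector_Spaces.linear scale ((*)) u}"

definition dual_scale :: "'k::field \<Rightarrow> ('a \<Rightarrow> 'k) \<Rightarrow> ('a \<Rightarrow> 'k)" where
  "dual_scale c u = (\<lambda>v. c * u v)"

definition dual_map :: "('a \<Rightarrow> 'v \<Rightarrow> 'v) \<Rightarrow> 'a \<Rightarrow> ('v \<Rightarrow> 'k::ab_group_add) \<Rightarrow> ('v \<Rightarrow> 'k)" where
  "dual_map f x u = (\<lambda>v. - u (f x v))"

definition left_mult :: "('a \<Rightarrow> 'a \<Rightarrow> 'a) \<Rightarrow> 'a \<Rightarrow> 'a \<Rightarrow> 'a" where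
  "left_mult m x y = m x y"

definition right_mult :: "('a \<Rightarrow> 'a \<Rightarrow> 'a) \<Rightarrow> 'a \<Rightarrow> 'a \<Rightarrow> 'a" where
  "right_mult m x y = m y x"

definition anti_pre_leibniz :: "('a::ab_group_add \<Rightarrow> 'a \<Rightarrow> 'a) \<Rightarrow> ('a \<Rightarrow> 'a \<Rightarrow> 'a) \<Rightarrow> bool" where
  "anti_pre_leibniz succ prec \<longleftrightarrow>
     (\<forall>x y z. prec (circ_op succ prec x y) z
               = succ x (circ_op succ prec y z) - succ y (circ_op succ prec x z)) \<and>
     (\<forall>x y z. succ (circ_op succ prec x y) z = succ y (succ x z) - succ x (succ y z)) \<and>
     (\<forall>x y z. prec x (circ_op succ prec y z) = prec (succ y x) z - succ y (prec x z)) \<and>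
     (\<forall>x y z. prec (succ x y) z = - prec (prec y x) z)"

end

theory Submission
  imports Defs
begin

(* Everything is governed by "defects" (left side minus right side) of the identities.
   Given (AL2)-(AL4), the defect D(y,x,z) of (AL1) is minus the defect of the identity
   in (2) at (x,y,z), and the Leibniz defect of \<circ> at (x,y,z) is D(y,x,z) - D(x,y,z);
   (AL4) makes D antisymmetric in x and y, so this is -2 D(x,y,z) and characteristic 0
   gives Leibniz <-> (AL1). The identities of the representation (-L, -R) on A are, term
   by term, the defects of (AL2), (AL3), (AL4) up to sign; on A^* they are these defects
   paired with a functional u, and linear functionals separate the points of A. *)

definition linear_action ::
  "('k::field \<Rightarrow> 'a::ab_group_add \<Rightarrow> 'a) \<Rightarrow> ('k \<Rightarrow> 'w::ab_group_add \<Rightarrow> 'w) \<Rightarrow> 'w set \<Rightarrow>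
   ('a \<Rightarrow> 'w \<Rightarrow> 'w) \<Rightarrow> bool" where
  "linear_action sA sV V l \<longleftrightarrow>
     (\<forall>x. \<forall>v\<in>V. l x v \<in> V) \<and>
     (\<forall>x. \<forall>v\<in>V. \<forall>w\<in>V. l x (v + w) = l x v + l x w) \<and>
     (\<forall>x c. \<forall>v\<in>V. l x (sV c v) = sV c (l x v)) \<and>
     (\<forall>x y. \<forall>v\<in>V. l (x + y) v = l x v + l y v) \<and>
     (\<forall>x c. \<forall>v\<in>V. l (sA c x) v = sV c (l x v))"

definition leibniz_rep_identities ::
  "('a \<Rightarrow> 'a \<Rightarrow> 'a) \<Rightarrow> 'w set \<Rightarrow> ('a \<Rightarrow> 'w \<Rightarrow> 'w) \<Rightarrow> ('a \<Rightarrow> 'w \<Rightarrow> 'w::ab_group_add) \<Rightarrow> bool" where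
  "leibniz_rep_identities m V l r \<longleftrightarrow>
     (\<forall>x y. \<forall>v\<in>V.
        l (m x y) v = l x (l y v) - l y (l x v) \<and>
        r (m x y) v = l x (r y v) - r y (l x v) \<and>
        r y (l x v) = - r y (r x v))"

lemma leibniz_rep_iff:
  "leibniz_rep sA m sV V l r \<longleftrightarrow>
     linear_action sA sV V l \<and> linear_action sA sV V r \<and> leibniz_rep_identities m V l r"
  unfolding leibniz_rep_def linear_action_def leibniz_rep_identities_def
  by (simp add: ball_conj_distrib all_conj_distrib conj_ac)

lemma vector_space_field_mult: "vector_space ((*) :: 'k::field \<Rightarrow> 'k \<Rightarrow> 'k)"
  by unfold_locales (auto simp: algebra_simps)

lemma bilinear_opD:
  assumes "bilinear_op scale m"
  shows "vector_space scale"
    and "m x (y + z) = m x y + m x z" "m x (scale c y) = scale c (m x y)"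
    and "m (x + y) z = m x z + m y z" "m (scale c x) z = scale c (m x z)"
  using assms by (simp_all add: bilinear_op_def Vector_Spaces.linear_iff)

lemma linear_action_neg_left_mult:
  assumes "bilinear_op scale m"
  shows "linear_action scale scale UNIV (\<lambda>x. - left_mult m x)"
proof -
  interpret vector_space scale using bilinear_opD(1)[OF assms] .
  show ?thesis by (simp add: linear_action_def left_mult_def bilinear_opD[OF assms])
qed

lemma linear_action_neg_right_mult:
  assumes "bilinear_op scale m"
  shows "linear_action scale scale UNIV (\<lambda>x. - right_mult m x)"
proof -
  interpret vector_space scale using bilinear_opD(1)[OF assms] .
  show ?thesis by (simp add: linear_action_def right_mult_def bilinear_opD[OF assms])
qed

lemma linear_action_dual_neg_left_mult:
  assumes "bilinear_op scale s"
  shows "linear_action scale dual_scale (dual_space scale) (\<lambda>x. - dual_map (left_mult s) x)"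
  using assms unfolding bilinear_op_def linear_action_def
  by (auto simp: dual_space_def Vector_Spaces.linear_iff dual_map_def left_mult_def dual_scale_def
      fun_eq_iff vector_space_field_mult)

lemma linear_action_dual_left_right:
  assumes "bilinear_op scale s" and "bilinear_op scale p"
  shows "linear_action scale dual_scale (dual_space scale)
           (\<lambda>x. dual_map (left_mult s) x + dual_map (right_mult p) x)"
  using assms unfolding bilinear_op_def linear_action_def
  by (auto simp: dual_space_def Vector_Spaces.linear_iff dual_map_def left_mult_def right_mult_def
      dual_scale_def fun_eq_iff vector_space_field_mult algebra_simps)

lemma dual_space_separates:
  fixes scale :: "'k::field \<Rightarrow> 'a::ab_group_add \<Rightarrow> 'a"
  assumes "vector_space scale" and "\<forall>u\<in>dual_space scale. u a = 0"
  shows "a = 0"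
proof (rule ccontr)
  assume "a \<noteq> 0"
  interpret vector_space_pair scale "(*) :: 'k::field \<Rightarrow> 'k \<Rightarrow> 'k"
    using assms(1) vector_space_field_mult by (simp add: vector_space_pair_def)
  have "vs1.independent {a}" using \<open>a \<noteq> 0\<close> by simp
  then obtain u where "Vector_Spaces.linear scale (*) u" "u a = 1"
    using linear_independent_extend[of "{a}" "\<lambda>_. 1"] by blast
  then show False using assms(2) by (auto simp: dual_space_def)
qed

lemma dual_space_additive: "u \<in> dual_space scale \<Longrightarrow> additive u"
  by (simp add: dual_space_def Vector_Spaces.linear_iff additive_def)

lemma vector_space_double_eq_0:
  fixes scale :: "'k::field_char_0 \<Rightarrow> 'a::ab_group_add \<Rightarrow> 'a"
    and a :: 'a
  assumes "vector_space scale" and "a + a = 0"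
  shows "a = 0"
proof -
  interpret vector_space scale by fact
  have "a = scale (1/2 + 1/2) a" by simp
  also have "\<dots> = scale (1/2) (a + a)" by (simp only: scale_left_distrib scale_right_distrib)
  finally show ?thesis using assms(2) by simp
qed

lemma diff_eq_imp_eq_iff: "(a::'a::ab_group_add) - b = d \<Longrightarrow> a = b \<longleftrightarrow> d = 0"
  by auto

lemma fun_diff_eq_imp_eq_iff:
  "(\<And>v. F v - G v = d v) \<Longrightarrow> F = G \<longleftrightarrow> (\<forall>v. d v = (0::'a::ab_group_add))"
  by (auto simp: fun_eq_iff)

locale biadditive_products =
  fixes s p :: "'a::ab_group_add \<Rightarrow> 'a \<Rightarrow> 'a"
  assumes s_add_left: "s (x + y) z = s x z + s y z"
    and s_add_right: "s x (y + z) = s x y + s x z"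
    and p_add_left: "p (x + y) z = p x z + p y z"
    and p_add_right: "p x (y + z) = p x y + p x z"
begin

abbreviation circ :: "'a \<Rightarrow> 'a \<Rightarrow> 'a" where
  "circ \<equiv> circ_op s p"

lemma additive_s_left: "additive (\<lambda>x. s x z)"
  by unfold_locales (fact s_add_left)

lemma additive_s_right: "additive (s x)"
  by unfold_locales (fact s_add_right)

lemma additive_p_left: "additive (\<lambda>x. p x z)"
  by unfold_locales (fact p_add_left)

lemma additive_p_right: "additive (p x)"
  by unfold_locales (fact p_add_right)

lemmas distrib_simps =
  s_add_left s_add_right p_add_left p_add_right
  additive.minus[OF additive_s_left] additive.minus[OF additive_s_right]
  additive.minus[OF additive_p_left] additive.minus[OF additive_p_right]
  additive.diff[OF additive_s_left] additive.diff[OF additive_s_right]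
  additive.diff[OF additive_p_left] additive.diff[OF additive_p_right]

definition AL1 :: bool where
  "AL1 \<longleftrightarrow> (\<forall>x y z. p (circ x y) z = s x (circ y z) - s y (circ x z))"

definition AL2 :: bool where
  "AL2 \<longleftrightarrow> (\<forall>x y z. s (circ x y) z = s y (s x z) - s x (s y z))"

definition AL3 :: bool where
  "AL3 \<longleftrightarrow> (\<forall>x y z. p x (circ y z) = p (s y x) z - s y (p x z))"

definition AL4 :: bool where
  "AL4 \<longleftrightarrow> (\<forall>x y z. p (s x y) z = - p (p y x) z)"

definition AL1' :: bool where
  "AL1' \<longleftrightarrow> (\<forall>x y z. s (circ x y) z = p x (circ y z) - p y (circ x z))"

lemma anti_pre_leibniz_iff: "anti_pre_leibniz s p \<longleftrightarrow> AL1 \<and> AL2 \<and> AL3 \<and> AL4"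
  by (simp add: anti_pre_leibniz_def AL1_def AL2_def AL3_def AL4_def)

definition AL1_defect :: "'a \<Rightarrow> 'a \<Rightarrow> 'a \<Rightarrow> 'a" where
  "AL1_defect x y z = p (circ x y) z - (s x (circ y z) - s y (circ x z))"

definition AL2_defect :: "'a \<Rightarrow> 'a \<Rightarrow> 'a \<Rightarrow> 'a" where
  "AL2_defect x y z = s (circ x y) z - (s y (s x z) - s x (s y z))"

definition AL3_defect :: "'a \<Rightarrow> 'a \<Rightarrow> 'a \<Rightarrow> 'a" where
  "AL3_defect x y z = p x (circ y z) - (p (s y x) z - s y (p x z))"

definition AL4_defect :: "'a \<Rightarrow> 'a \<Rightarrow> 'a \<Rightarrow> 'a" where
  "AL4_defect x y z = p (s x y) z + p (p y x) z"

lemma AL1_iff_defect: "AL1 \<longleftrightarrow> (\<forall>x y z. AL1_defect x y z = 0)"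
  by (simp add: AL1_def AL1_defect_def)

lemma AL2_iff_defect: "AL2 \<longleftrightarrow> (\<forall>x y z. AL2_defect x y z = 0)"
  by (simp add: AL2_def AL2_defect_def)

lemma AL3_iff_defect: "AL3 \<longleftrightarrow> (\<forall>x y z. AL3_defect x y z = 0)"
  by (simp add: AL3_def AL3_defect_def)

lemma AL4_iff_defect: "AL4 \<longleftrightarrow> (\<forall>x y z. AL4_defect x y z = 0)"
  by (simp add: AL4_def AL4_defect_def eq_neg_iff_add_eq_0)

lemma circ_distrib:
  "s a (circ x y) = s a (s x y) + s a (p x y)" "p a (circ x y) = p a (s x y) + p a (p x y)"
  "s (circ x y) a = s (s x y) a + s (p x y) a" "p (circ x y) a = p (s x y) a + p (p x y) a"
  by (simp_all add: circ_op_def distrib_simps)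

lemma AL1_defect_swap_eq:
  assumes AL2 AL3 AL4
  shows "AL1_defect y x z = p x (circ y z) - p y (circ x z) - s (circ x y) z"
proof -
  have AL3_inst: "p x (circ y z) = p (s y x) z - s y (p x z)"
      "p y (circ x z) = p (s x y) z - s x (p y z)"
    and AL2_inst: "s (circ x y) z = s y (s x z) - s x (s y z)"
    and AL4_inst: "p (s x y) z = - p (p y x) z"
    using assms by (auto simp: AL2_def AL3_def AL4_def)
  show ?thesis
    unfolding AL1_defect_def AL3_inst AL2_inst
    by (simp add: circ_distrib distrib_simps AL4_inst algebra_simps)
qed

lemma AL1_iff_AL1':
  assumes AL2 AL3 AL4
  shows "AL1 \<longleftrightarrow> AL1'"
proof -
  have "AL1_defect y x z = 0 \<longleftrightarrow> s (circ x y) z = p x (circ y z) - p y (circ x z)" for x y z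
    unfolding AL1_defect_swap_eq[OF assms] by auto
  then show ?thesis
    unfolding AL1_iff_defect AL1'_def by metis
qed

lemma AL1_defect_antisym:
  assumes AL4
  shows "AL1_defect y x z = - AL1_defect x y z"
proof -
  have "p (s x y) z = - p (p y x) z" "p (s y x) z = - p (p x y) z"
    using assms by (auto simp: AL4_def)
  then show ?thesis
    unfolding AL1_defect_def by (simp add: circ_distrib distrib_simps algebra_simps)
qed

lemma leibniz_defect_eq:
  assumes AL2 AL3 AL4
  shows "circ x (circ y z) - (circ (circ x y) z + circ y (circ x z))
           = - (AL1_defect x y z + AL1_defect x y z)"
proof -
  have outer: "circ x (circ y z) = s x (circ y z) + p x (circ y z)"
    "circ (circ x y) z = s (circ x y) z + p (circ x y) z"
    "circ y (circ x z) = s y (circ x z) + p y (circ x z)"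
    by (simp_all only: circ_op_def)
  have "circ x (circ y z) - (circ (circ x y) z + circ y (circ x z))
          = AL1_defect y x z - AL1_defect x y z"
    unfolding outer AL1_defect_swap_eq[OF assms, of y x z]
    by (simp add: AL1_defect_def algebra_simps)
  also have "\<dots> = - (AL1_defect x y z + AL1_defect x y z)"
    unfolding AL1_defect_antisym[OF assms(3), of y x z] by (simp add: algebra_simps)
  finally show ?thesis .
qed

lemma leibniz_algebra_iff_AL1:
  assumes two_torsion_free: "\<And>a :: 'a. a + a = 0 \<Longrightarrow> a = 0"
    and AL2 AL3 AL4
  shows "leibniz_algebra circ \<longleftrightarrow> AL1"
proof -
  have "circ x (circ y z) = circ (circ x y) z + circ y (circ x z) \<longleftrightarrow> AL1_defect x y z = 0"
    for x y z
  proof -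
    have "circ x (circ y z) = circ (circ x y) z + circ y (circ x z)
            \<longleftrightarrow> - (AL1_defect x y z + AL1_defect x y z) = 0"
      by (rule diff_eq_imp_eq_iff[OF leibniz_defect_eq[OF assms(2-4)]])
    also have "\<dots> \<longleftrightarrow> AL1_defect x y z + AL1_defect x y z = 0"
      by (rule neg_equal_0_iff_equal)
    also have "\<dots> \<longleftrightarrow> AL1_defect x y z = 0"
      by (auto dest: two_torsion_free)
    finally show ?thesis .
  qed
  then show ?thesis
    unfolding leibniz_algebra_def AL1_iff_defect by simp
qed

lemma leibniz_rep_identities_regular_iff:
  "leibniz_rep_identities circ UNIV (\<lambda>x. - left_mult s x) (\<lambda>x. - right_mult p x)
     \<longleftrightarrow> AL2 \<and> AL3 \<and> AL4"
proof -
  let ?l = "\<lambda>x. - left_mult s x" and ?r = "\<lambda>x. - right_mult p x"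
  have first: "?l (circ x y) v = ?l x (?l y v) - ?l y (?l x v) \<longleftrightarrow> - AL2_defect x y v = 0"
    and second: "?r (circ x y) v = ?l x (?r y v) - ?r y (?l x v) \<longleftrightarrow> - AL3_defect v x y = 0"
    and third: "?r y (?l x v) = - ?r y (?r x v) \<longleftrightarrow> AL4_defect x v y = 0" for x y v
    by (rule diff_eq_imp_eq_iff,
        simp add: left_mult_def right_mult_def AL2_defect_def AL3_defect_def AL4_defect_def
          distrib_simps algebra_simps)+
  have "leibniz_rep_identities circ UNIV ?l ?r
      \<longleftrightarrow> (\<forall>x y v. AL2_defect x y v = 0) \<and> (\<forall>x y v. AL3_defect v x y = 0) \<and>
          (\<forall>x y v. AL4_defect x v y = 0)"
    unfolding leibniz_rep_identities_def first second third by (simp add: all_conj_distrib)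
  also have "\<dots> \<longleftrightarrow> AL2 \<and> AL3 \<and> AL4"
    unfolding AL2_iff_defect AL3_iff_defect AL4_iff_defect by (intro conj_cong) blast+
  finally show ?thesis .
qed

lemma leibniz_rep_identities_dual_iff:
  fixes U :: "('a \<Rightarrow> 'k::ab_group_add) set"
  assumes additive: "\<And>u. u \<in> U \<Longrightarrow> additive u"
    and separating: "\<And>a. \<forall>u\<in>U. u a = 0 \<Longrightarrow> a = 0"
  shows "leibniz_rep_identities circ U (\<lambda>x. - dual_map (left_mult s) x)
           (\<lambda>x. dual_map (left_mult s) x + dual_map (right_mult p) x)
         \<longleftrightarrow> AL2 \<and> AL3 \<and> AL4"
proof -
  let ?l = "\<lambda>x. - dual_map (left_mult s) x"
    and ?r = "\<lambda>x. dual_map (left_mult s) x + dual_map (right_mult p) x"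
  have vanishing: "(\<forall>u\<in>U. u a = 0) \<longleftrightarrow> a = 0" for a
    using separating additive.zero[OF additive] by blast
  have first: "?l (circ x y) u = ?l x (?l y u) - ?l y (?l x u)
          \<longleftrightarrow> (\<forall>v. u (AL2_defect x y v) = 0)"
    and second: "?r (circ x y) u = ?l x (?r y u) - ?r y (?l x u)
          \<longleftrightarrow> (\<forall>v. - u (AL2_defect x y v + AL3_defect v x y) = 0)"
    and third: "?r y (?l x u) = - ?r y (?r x u) \<longleftrightarrow> (\<forall>v. u (AL4_defect y v x) = 0)"
    if "u \<in> U" for u x y
  proof -
    interpret additive u using additive[OF that] .
    show "?l (circ x y) u = ?l x (?l y u) - ?l y (?l x u)
          \<longleftrightarrow> (\<forall>v. u (AL2_defect x y v) = 0)"
      and "?r (circ x y) u = ?l x (?r y u) - ?r y (?l x u)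
          \<longleftrightarrow> (\<forall>v. - u (AL2_defect x y v + AL3_defect v x y) = 0)"
      and "?r y (?l x u) = - ?r y (?r x u) \<longleftrightarrow> (\<forall>v. u (AL4_defect y v x) = 0)"
      by (rule fun_diff_eq_imp_eq_iff,
          simp add: dual_map_def left_mult_def right_mult_def AL2_defect_def AL3_defect_def
            AL4_defect_def add diff minus distrib_simps algebra_simps)+
  qed
  have "leibniz_rep_identities circ U ?l ?r
      \<longleftrightarrow> (\<forall>x y v. \<forall>u\<in>U. u (AL2_defect x y v) = 0 \<and>
             u (AL2_defect x y v + AL3_defect v x y) = 0 \<and> u (AL4_defect y v x) = 0)"
    unfolding leibniz_rep_identities_def Ball_def
    by (simp only: first second third cong: imp_cong) auto
  also have "\<dots> \<longleftrightarrow> (\<forall>x y v. AL2_defect x y v = 0 \<and>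
             AL2_defect x y v + AL3_defect v x y = 0 \<and> AL4_defect y v x = 0)"
    by (simp add: ball_conj_distrib vanishing)
  also have "\<dots> \<longleftrightarrow> (\<forall>x y v. AL2_defect x y v = 0 \<and> AL3_defect v x y = 0 \<and> AL4_defect y v x = 0)"
    by (simp cong: conj_cong)
  also have "\<dots> \<longleftrightarrow> AL2 \<and> AL3 \<and> AL4"
    unfolding AL2_iff_defect AL3_iff_defect AL4_iff_defect by blast
  finally show ?thesis .
qed

end

locale bilinear_products =
  fixes scale :: "'k::field \<Rightarrow> 'a::ab_group_add \<Rightarrow> 'a"
    and s p :: "'a \<Rightarrow> 'a \<Rightarrow> 'a"
  assumes bilinear_s: "bilinear_op scale s"
    and bilinear_p: "bilinear_op scale p"
begin

sublocale biadditive_products s p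
  by unfold_locales (simp_all add: bilinear_opD[OF bilinear_s] bilinear_opD[OF bilinear_p])

lemma leibniz_rep_regular_iff:
  "leibniz_rep scale circ scale UNIV (\<lambda>x. - left_mult s x) (\<lambda>x. - right_mult p x)
     \<longleftrightarrow> AL2 \<and> AL3 \<and> AL4"
  unfolding leibniz_rep_iff leibniz_rep_identities_regular_iff
  using linear_action_neg_left_mult[OF bilinear_s] linear_action_neg_right_mult[OF bilinear_p]
  by blast

lemma leibniz_rep_dual_iff:
  "leibniz_rep scale circ dual_scale (dual_space scale)
     (\<lambda>x. - dual_map (left_mult s) x) (\<lambda>x. dual_map (left_mult s) x + dual_map (right_mult p) x)
     \<longleftrightarrow> AL2 \<and> AL3 \<and> AL4"
proof -
  have vs: "vector_space scale"
    by (rule bilinear_opD(1)[OF bilinear_s])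
  have identities_iff: "leibniz_rep_identities circ (dual_space scale)
      (\<lambda>x. - dual_map (left_mult s) x) (\<lambda>x. dual_map (left_mult s) x + dual_map (right_mult p) x)
     \<longleftrightarrow> AL2 \<and> AL3 \<and> AL4"
    by (rule leibniz_rep_identities_dual_iff)
      (simp_all add: dual_space_additive dual_space_separates[OF vs])
  show ?thesis
    unfolding leibniz_rep_iff identities_iff
    using linear_action_dual_neg_left_mult[OF bilinear_s]
      linear_action_dual_left_right[OF bilinear_s bilinear_p]
    by simp
qed

end

theorem proposition2p6:
  fixes scale :: "'k::field_char_0 \<Rightarrow> 'a::ab_group_add \<Rightarrow> 'a"
    and B :: "'a set"
    and succ prec :: "'a \<Rightarrow> 'a \<Rightarrow> 'a"
  assumes "finite_dimensional_vector_space scale B"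
    and "bilinear_op scale succ"
    and "bilinear_op scale prec"
  shows "(anti_pre_leibniz succ prec
            \<longleftrightarrow>
          ((\<forall>x y z. succ (circ_op succ prec x y) z = succ y (succ x z) - succ x (succ y z)) \<and>
           (\<forall>x y z. prec x (circ_op succ prec y z) = prec (succ y x) z - succ y (prec x z)) \<and>
           (\<forall>x y z. prec (succ x y) z = - prec (prec y x) z) \<and>
           (\<forall>x y z. succ (circ_op succ prec x y) z
                     = prec x (circ_op succ prec y z) - prec y (circ_op succ prec x z))))
       \<and> (anti_pre_leibniz succ prec
            \<longleftrightarrow>
          (leibniz_algebra (circ_op succ prec) \<and>
           leibniz_rep scale (circ_op succ prec) scale UNIV
             (\<lambda>x. - left_mult succ x) (\<lambda>x. - right_mult prec x)))
       \<and> (anti_pre_leibniz succ prec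
            \<longleftrightarrow>
          (leibniz_algebra (circ_op succ prec) \<and>
           leibniz_rep scale (circ_op succ prec) dual_scale (dual_space scale)
             (\<lambda>x. - dual_map (left_mult succ) x)
             (\<lambda>x. dual_map (left_mult succ) x + dual_map (right_mult prec) x)))"
proof -
  interpret bilinear_products scale succ prec
    using assms(2,3) by unfold_locales
  have leibniz_iff: "leibniz_algebra (circ_op succ prec) \<longleftrightarrow> AL1" if AL2 AL3 AL4
    using leibniz_algebra_iff_AL1 vector_space_double_eq_0[OF bilinear_opD(1)[OF assms(2)]] that
    by blast
  show ?thesis
    unfolding anti_pre_leibniz_iff leibniz_rep_regular_iff leibniz_rep_dual_iff
      AL2_def[symmetric] AL3_def[symmetric] AL4_def[symmetric] AL1'_def[symmetric]
    using AL1_iff_AL1' leibniz_iff by blast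
qed

end
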